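(* Let $t$ be a positive integer and let $p_1(x_1,\ldots,x_t)$, $p_2(x_1,\ldots,x_t)$ be polynomials with integer coefficients. Suppose there exist integers $s_1,s_2\ge 1$, matrices $A_1,M_1,N_1,B_1\in\mathbb{Z}^{s_1\times s_1}_{\rm uptr}$ and $A_2,M_2,N_2,B_2\in\mathbb{Z}^{s_2\times s_2}_{\rm uptr}$ such that \[A_1M_1^{a_1}N_1M_1^{a_2}N_1\cdots N_1M_1^{a_t}B_1=p_1(a_1,\ldots,a_t)E_{s_1}\] and \[A_2M_2^{a_1}N_2M_2^{a_2}N_2\cdots N_2M_2^{a_t}B_2=p_2(a_1,\ldots,a_t)E_{s_2}\] for all $a_1,\ldots,a_t\in\mathbb{N}$ (each product containing $t-1$ factors $N_j$). Then: (i) there exist $s_3\ge 1$ and $A_3,M_3,N_3,B_3\in\mathbb{Z}^{s_3\times s_3}_{\rm uptr}$ such that $A_3M_3^{a_1}N_3M_3^{a_2}N_3\cdots N_3M_3^{a_t}B_3=(p_1+p_2)(a_1,\ldots,a_t)E_{s_3}$ for all $a_1,\ldots,a_t\in\mathbb{N}$; (ii) there exist $s_4\ge 1$ and $A_4,M_4,N_4,B_4\in\mathbb{Z}^{s_4\times s_4}_{\rm uptr}$ such that $A_4M_4^{a_1}N_4M_4^{a_2}N_4\cdots N_4M_4^{a_t}B_4=(p_1p_2)(a_1,\ldots,a_t)E_{s_4}$ for all $a_1,\ldots,a_t\in\mathbb{N}$; (iii) for every $c\in\mathbb{Z}$ there exists $A_5\in\mathbb{Z}^{s_1\times s_1}_{\rm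 uptr}$ such that $A_5M_1^{a_1}N_1M_1^{a_2}N_1\cdots N_1M_1^{a_t}B_1=c\,p_1(a_1,\ldots,a_t)E_{s_1}$ for all $a_1,\ldots,a_t\in\mathbb{N}$.
   Context: $\mathbb{N}$ is the set of nonnegative integers. $\mathbb{Z}^{s\times s}_{\rm uptr}$ is the set of upper-triangular $s\times s$ integer matrices. $E_s$ denotes the $s\times s$ matrix whose only nonzero entry is the entry in row $1$, column $s$, equal to $1$. *)

theory Defs
  imports "Jordan_Normal_Form.Matrix" "HOL-Library.Poly_Mapping"
begin

(* Multivariate integer polynomials: finitely supported coefficient maps from
   monomials (exponent vectors, nat \<Rightarrow>\<^sub>0 nat) to int. *)
type_synonym int_mpoly = "(nat \<Rightarrow>\<^sub>0 nat) \<Rightarrow>\<^sub>0 int"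

(* p only involves the variables x_1..x_t (indices 0..t-1) *)
definition mpoly_in_vars :: "nat \<Rightarrow> int_mpoly \<Rightarrow> bool" where
  "mpoly_in_vars t p \<longleftrightarrow> (\<forall>m \<in> Poly_Mapping.keys p. Poly_Mapping.keys m \<subseteq> {..<t})"

definition mpoly_eval :: "int_mpoly \<Rightarrow> nat list \<Rightarrow> int" where
  "mpoly_eval p a = (\<Sum>m\<in>Poly_Mapping.keys p. Poly_Mapping.lookup p m * (\<Prod>i\<in>Poly_Mapping.keys m. int (a ! i) ^ Poly_Mapping.lookup m i))"

definition uptr_mat :: "nat \<Rightarrow> int mat \<Rightarrow> bool" where
  "uptr_mat s A \<longleftrightarrow> A \<in> carrier_mat s s \<and> upper_triangular A"

definition E_mat :: "nat \<Rightarrow> int mat" where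
  "E_mat s = mat s s (\<lambda>(i,j). if i = 0 \<and> j = s - 1 then 1 else 0)"

fun word_prod :: "int mat \<Rightarrow> int mat \<Rightarrow> nat list \<Rightarrow> int mat" where
  "word_prod M N [] = M ^\<^sub>m 0"
| "word_prod M N [x] = M ^\<^sub>m x"
| "word_prod M N (x # y # xs) = M ^\<^sub>m x * N * word_prod M N (y # xs)"

end

theory Submission
  imports Defs
begin

text \<open>
  Evaluation of polynomials is a ring homomorphism, so it suffices to show that the
  functions representable as a corner entry \<open>A M\<^sup>a\<^sup>1 N \<dots> N M\<^sup>a\<^sup>t B = f(a) E\<^sub>s\<close>
  with upper-triangular integer matrices are closed under sums, products and scalar
  multiples. Products come from Kronecker products: they are multiplicative, hence commute
  with the word \<open>M\<^sup>a\<^sup>1 N \<dots> N M\<^sup>a\<^sup>t\<close>, and \<open>E\<^sub>n \<otimes> E\<^sub>m = E\<^sub>n\<^sub>m\<close>.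
  Sums come from the block-diagonal sum of the two words, with a single off-diagonal block
  in the outer factors that moves both corner entries into the corner of \<open>E\<^sub>n\<^sub>+\<^sub>m\<close>.
  Scalar multiples only rescale \<open>A\<close>.
\<close>

definition monomial_eval :: "nat list \<Rightarrow> (nat \<Rightarrow>\<^sub>0 nat) \<Rightarrow> int" where
  "monomial_eval a m = (\<Prod>i\<in>Poly_Mapping.keys m. int (a ! i) ^ Poly_Mapping.lookup m i)"

lemma monomial_eval_add: "monomial_eval a (m + n) = monomial_eval a m * monomial_eval a n"
proof -
  let ?S = "Poly_Mapping.keys m \<union> Poly_Mapping.keys n"
  have on_S: "monomial_eval a k = (\<Prod>i\<in>?S. int (a ! i) ^ Poly_Mapping.lookup k i)"
    if "Poly_Mapping.keys k \<subseteq> ?S" for k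
    unfolding monomial_eval_def
    by (rule prod.mono_neutral_left) (use that in \<open>auto simp: in_keys_iff\<close>)
  have "monomial_eval a (m + n) = (\<Prod>i\<in>?S. int (a ! i) ^ Poly_Mapping.lookup (m + n) i)"
    by (rule on_S) (rule keys_add)
  also have "\<dots> = (\<Prod>i\<in>?S. int (a ! i) ^ Poly_Mapping.lookup m i * int (a ! i) ^ Poly_Mapping.lookup n i)"
    by (simp add: lookup_add power_add)
  also have "\<dots> = monomial_eval a m * monomial_eval a n"
    by (simp add: prod.distrib on_S)
  finally show ?thesis .
qed

lemma mpoly_eval_monomial_eval:
  "mpoly_eval p a = (\<Sum>m\<in>Poly_Mapping.keys p. Poly_Mapping.lookup p m * monomial_eval a m)"
  unfolding mpoly_eval_def monomial_eval_def ..

lemma mpoly_eval_zero [simp]: "mpoly_eval 0 a = 0"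
  by (simp add: mpoly_eval_def)

lemma mpoly_eval_add: "mpoly_eval (p + q) a = mpoly_eval p a + mpoly_eval q a"
  unfolding mpoly_eval_monomial_eval
  by (rule setsum_keys_plus_distrib) (auto simp: distrib_right)

lemma mpoly_eval_sum: "mpoly_eval (\<Sum>x\<in>S. f x) a = (\<Sum>x\<in>S. mpoly_eval (f x) a)"
  by (induction S rule: infinite_finite_induct) (auto simp: mpoly_eval_add)

lemma mpoly_eval_single: "mpoly_eval (Poly_Mapping.single m c) a = c * monomial_eval a m"
  by (simp add: mpoly_eval_monomial_eval)

lemma poly_mapping_sum_single:
  "p = (\<Sum>m\<in>Poly_Mapping.keys p. Poly_Mapping.single m (Poly_Mapping.lookup p m))"
  by (rule poly_mapping_eqI) (simp add: lookup_sum lookup_single when_def in_keys_iff)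

lemma mpoly_eval_mult: "mpoly_eval (p * q) a = mpoly_eval p a * mpoly_eval q a"
proof -
  let ?P = "Poly_Mapping.keys p" and ?Q = "Poly_Mapping.keys q"
  have "p * q = (\<Sum>m\<in>?P. \<Sum>n\<in>?Q.
      Poly_Mapping.single (m + n) (Poly_Mapping.lookup p m * Poly_Mapping.lookup q n))"
    by (subst (1 2) poly_mapping_sum_single) (simp add: sum_product mult_single)
  then have "mpoly_eval (p * q) a = (\<Sum>m\<in>?P. \<Sum>n\<in>?Q.
      Poly_Mapping.lookup p m * Poly_Mapping.lookup q n * monomial_eval a (m + n))"
    by (simp add: mpoly_eval_sum mpoly_eval_single)
  also have "\<dots> = (\<Sum>m\<in>?P. \<Sum>n\<in>?Q.
      (Poly_Mapping.lookup p m * monomial_eval a m) * (Poly_Mapping.lookup q n * monomial_eval a n))"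
    by (simp add: monomial_eval_add mult_ac)
  also have "\<dots> = mpoly_eval p a * mpoly_eval q a"
    by (simp add: mpoly_eval_monomial_eval sum_product)
  finally show ?thesis .
qed

lemma word_prod_carrier:
  assumes "M \<in> carrier_mat n n" "N \<in> carrier_mat n n"
  shows "word_prod M N a \<in> carrier_mat n n"
  using assms by (induction M N a rule: word_prod.induct) auto

lemma pow_mat_hom2:
  fixes f :: "'a :: semiring_1 mat \<Rightarrow> 'b :: semiring_1 mat \<Rightarrow> 'c :: semiring_1 mat"
  assumes "X \<in> carrier_mat n n" "Y \<in> carrier_mat m m"
    and carrier: "\<And>X Y. X \<in> carrier_mat n n \<Longrightarrow> Y \<in> carrier_mat m m \<Longrightarrow> f X Y \<in> carrier_mat k k"
    and mult: "\<And>X Y X' Y'. X \<in> carrier_mat n n \<Longrightarrow> Y \<in> carrier_mat m m \<Longrightarrow>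
      X' \<in> carrier_mat n n \<Longrightarrow> Y' \<in> carrier_mat m m \<Longrightarrow> f X Y * f X' Y' = f (X * X') (Y * Y')"
    and one: "f (1\<^sub>m n) (1\<^sub>m m) = 1\<^sub>m k"
  shows "f X Y ^\<^sub>m i = f (X ^\<^sub>m i) (Y ^\<^sub>m i)"
proof (induction i)
  case 0
  show ?case using carrier[OF assms(1,2)] one assms(1,2) by simp
next
  case (Suc i)
  then show ?case using assms by (simp add: mult)
qed

lemma word_prod_hom2:
  assumes "M \<in> carrier_mat n n" "N \<in> carrier_mat n n" "M' \<in> carrier_mat m m" "N' \<in> carrier_mat m m"
    and carrier: "\<And>X Y. X \<in> carrier_mat n n \<Longrightarrow> Y \<in> carrier_mat m m \<Longrightarrow> f X Y \<in> carrier_mat k k"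
    and mult: "\<And>X Y X' Y'. X \<in> carrier_mat n n \<Longrightarrow> Y \<in> carrier_mat m m \<Longrightarrow>
      X' \<in> carrier_mat n n \<Longrightarrow> Y' \<in> carrier_mat m m \<Longrightarrow> f X Y * f X' Y' = f (X * X') (Y * Y')"
    and one: "f (1\<^sub>m n) (1\<^sub>m m) = 1\<^sub>m k"
  shows "word_prod (f M M') (f N N') a = f (word_prod M N a) (word_prod M' N' a)"
proof (induction a rule: induct_list012)
  case 1
  then show ?case using pow_mat_hom2[OF assms(1,3) carrier mult one, of 0] assms by simp
next
  case (2 x)
  then show ?case using pow_mat_hom2[OF assms(1,3) carrier mult one] by simp
next
  case (3 x y xs)
  have "M ^\<^sub>m x * N \<in> carrier_mat n n" "M' ^\<^sub>m x * N' \<in> carrier_mat m m"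
    using assms by auto
  then show ?case
    using 3 pow_mat_hom2[OF assms(1,3) carrier mult one] assms word_prod_carrier
    by (simp add: mult)
qed

lemma word_prod_block_diag:
  assumes "M \<in> carrier_mat n n" "N \<in> carrier_mat n n" "M' \<in> carrier_mat m m" "N' \<in> carrier_mat m m"
  shows "word_prod (four_block_mat M (0\<^sub>m n m) (0\<^sub>m m n) M') (four_block_mat N (0\<^sub>m n m) (0\<^sub>m m n) N') a
    = four_block_mat (word_prod M N a) (0\<^sub>m n m) (0\<^sub>m m n) (word_prod M' N' a)"
proof (rule word_prod_hom2[OF assms, where k = "n + m"])
  fix X Y X' Y' :: "int mat"
  assume "X \<in> carrier_mat n n" "Y \<in> carrier_mat m m" "X' \<in> carrier_mat n n" "Y' \<in> carrier_mat m m"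
  then show "four_block_mat X (0\<^sub>m n m) (0\<^sub>m m n) Y * four_block_mat X' (0\<^sub>m n m) (0\<^sub>m m n) Y'
    = four_block_mat (X * X') (0\<^sub>m n m) (0\<^sub>m m n) (Y * Y')"
    by (subst mult_four_block_mat) auto
qed auto

definition single_entry_mat :: "nat \<Rightarrow> nat \<Rightarrow> nat \<Rightarrow> nat \<Rightarrow> 'a :: zero_neq_one mat" where
  "single_entry_mat n m i j = mat n m (\<lambda>(k, l). if k = i \<and> l = j then 1 else 0)"

lemma dim_single_entry_mat:
  "dim_row (single_entry_mat n m i j) = n" "dim_col (single_entry_mat n m i j) = m"
  by (simp_all add: single_entry_mat_def)

lemma single_entry_mat_carrier [simp]: "single_entry_mat n m i j \<in> carrier_mat n m"
  by (simp add: single_entry_mat_def)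

lemma E_mat_single_entry: "E_mat s = single_entry_mat s s 0 (s - 1)"
  by (simp add: E_mat_def single_entry_mat_def)

lemma single_entry_mat_mult:
  assumes "j < k"
  shows "(single_entry_mat n k i j :: 'a :: semiring_1 mat) * single_entry_mat k m j l
    = single_entry_mat n m i l"
  using assms
  by (intro eq_matI) (auto simp: single_entry_mat_def scalar_prod_def
      if_distrib[of "\<lambda>x. x * _"] sum.delta cong: if_cong)

lemma sum_lessThan_mult:
  fixes f :: "nat \<Rightarrow> 'a :: comm_monoid_add"
  shows "(\<Sum>k < a * b. f k) = (\<Sum>i < a. \<Sum>j < b. f (i * b + j))"
proof -
  have "(\<Sum>k \<in> {i * b ..< i * b + b}. f k) = (\<Sum>j < b. f (i * b + j))" for i
    using sum.shift_bounds_nat_ivl[of f 0 "i * b" b] by (simp add: atLeast0LessThan add.commute)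
  then show ?thesis
    by (simp only: sum.nat_group[symmetric])
qed

definition kron_mat :: "'a :: times mat \<Rightarrow> 'a mat \<Rightarrow> 'a mat" where
  "kron_mat X Y = mat (dim_row X * dim_row Y) (dim_col X * dim_col Y)
     (\<lambda>(i, j). X $$ (i div dim_row Y, j div dim_col Y) * Y $$ (i mod dim_row Y, j mod dim_col Y))"

lemma kron_mat_carrier:
  "X \<in> carrier_mat n n' \<Longrightarrow> Y \<in> carrier_mat m m' \<Longrightarrow> kron_mat X Y \<in> carrier_mat (n * m) (n' * m')"
  by (simp add: kron_mat_def)

lemma kron_mat_mult:
  fixes X X' Y Y' :: "'a :: comm_semiring_0 mat"
  assumes "X \<in> carrier_mat n k" "X' \<in> carrier_mat k n'" "Y \<in> carrier_mat m l" "Y' \<in> carrier_mat l m'"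
  shows "kron_mat X Y * kron_mat X' Y' = kron_mat (X * X') (Y * Y')"
proof (rule eq_matI)
  fix i j assume "i < dim_row (kron_mat (X * X') (Y * Y'))" "j < dim_col (kron_mat (X * X') (Y * Y'))"
  then have i: "i < n * m" and j: "j < n' * m'" using assms by (auto simp: kron_mat_def)
  then have "m > 0" "m' > 0" by (auto intro!: gr0I)
  then have ij: "i div m < n" "j div m' < n'" "i mod m < m" "j mod m' < m'"
    using i j by (auto simp: less_mult_imp_div_less)
  have "(kron_mat X Y * kron_mat X' Y') $$ (i, j) =
     (\<Sum>r < k * l. X $$ (i div m, r div l) * Y $$ (i mod m, r mod l) *
          (X' $$ (r div l, j div m') * Y' $$ (r mod l, j mod m')))"
    using assms i j by (auto simp: kron_mat_def scalar_prod_def atLeast0LessThan intro!: sum.cong)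
  also have "\<dots> = (\<Sum>r1 < k. \<Sum>r2 < l. X $$ (i div m, r1) * X' $$ (r1, j div m') *
      (Y $$ (i mod m, r2) * Y' $$ (r2, j mod m')))"
    unfolding sum_lessThan_mult by (auto intro!: sum.cong simp: mult_ac)
  also have "\<dots> = (\<Sum>r1 < k. X $$ (i div m, r1) * X' $$ (r1, j div m')) *
      (\<Sum>r2 < l. Y $$ (i mod m, r2) * Y' $$ (r2, j mod m'))"
    by (simp add: sum_product)
  also have "\<dots> = kron_mat (X * X') (Y * Y') $$ (i, j)"
    using assms i j ij by (simp add: kron_mat_def scalar_prod_def atLeast0LessThan)
  finally show "(kron_mat X Y * kron_mat X' Y') $$ (i, j) = kron_mat (X * X') (Y * Y') $$ (i, j)" .
qed (use assms in \<open>auto simp: kron_mat_def\<close>)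

lemma div_mod_eq_iff:
  assumes "(b :: nat) < q"
  shows "r div q = a \<and> r mod q = b \<longleftrightarrow> r = a * q + b"
proof
  assume "r div q = a \<and> r mod q = b"
  then show "r = a * q + b" by (metis div_mult_mod_eq)
qed (use assms in simp)

lemma kron_mat_single_entry:
  assumes "k < m" "l < m'"
  shows "kron_mat (single_entry_mat n n' i j) (single_entry_mat m m' k l :: 'a :: semiring_1 mat)
    = single_entry_mat (n * m) (n' * m') (i * m + k) (j * m' + l)"
proof (rule eq_matI)
  fix r c assume "r < dim_row (single_entry_mat (n * m) (n' * m') (i * m + k) (j * m' + l) :: 'a mat)"
    "c < dim_col (single_entry_mat (n * m) (n' * m') (i * m + k) (j * m' + l) :: 'a mat)"
  then have rc: "r < n * m" "c < n' * m'" by (simp_all add: dim_single_entry_mat)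
  then have "m > 0" "m' > 0" by (auto intro!: gr0I)
  with rc have "kron_mat (single_entry_mat n n' i j) (single_entry_mat m m' k l) $$ (r, c)
      = (if (r div m = i \<and> r mod m = k) \<and> (c div m' = j \<and> c mod m' = l) then 1 else (0 :: 'a))"
    by (simp add: kron_mat_def single_entry_mat_def less_mult_imp_div_less)
  also have "\<dots> = single_entry_mat (n * m) (n' * m') (i * m + k) (j * m' + l) $$ (r, c)"
    using rc by (simp only: div_mod_eq_iff assms) (simp add: single_entry_mat_def)
  finally show "kron_mat (single_entry_mat n n' i j) (single_entry_mat m m' k l) $$ (r, c)
    = (single_entry_mat (n * m) (n' * m') (i * m + k) (j * m' + l) :: 'a mat) $$ (r, c)" .
qed (simp_all add: kron_mat_def dim_single_entry_mat)

lemma kron_mat_one: "kron_mat (1\<^sub>m n) (1\<^sub>m m :: 'a :: semiring_1 mat) = 1\<^sub>m (n * m)"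
proof (rule eq_matI)
  fix i j assume "i < dim_row (1\<^sub>m (n * m))" "j < dim_col (1\<^sub>m (n * m) :: 'a mat)"
  then have i: "i < n * m" and j: "j < n * m" by auto
  then have "m > 0" by (auto intro!: gr0I)
  have "i div m = j div m \<and> i mod m = j mod m \<longleftrightarrow> i = j"
    by (metis div_mult_mod_eq)
  then show "kron_mat (1\<^sub>m n) (1\<^sub>m m) $$ (i, j) = (1\<^sub>m (n * m) :: 'a mat) $$ (i, j)"
    using i j \<open>m > 0\<close> by (auto simp: kron_mat_def less_mult_imp_div_less)
qed (auto simp: kron_mat_def)

lemma kron_mat_smult:
  "kron_mat (x \<cdot>\<^sub>m X) (y \<cdot>\<^sub>m Y) = (x * y :: 'a :: comm_semiring_0) \<cdot>\<^sub>m kron_mat X Y"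
proof (rule eq_matI)
  fix i j assume "i < dim_row ((x * y) \<cdot>\<^sub>m kron_mat X Y)" "j < dim_col ((x * y) \<cdot>\<^sub>m kron_mat X Y)"
  then have "i < dim_row X * dim_row Y" "j < dim_col X * dim_col Y" by (auto simp: kron_mat_def)
  moreover from this have "dim_row Y > 0" "dim_col Y > 0" by (auto intro!: gr0I)
  ultimately show "kron_mat (x \<cdot>\<^sub>m X) (y \<cdot>\<^sub>m Y) $$ (i, j) = ((x * y) \<cdot>\<^sub>m kron_mat X Y) $$ (i, j)"
    by (simp add: kron_mat_def less_mult_imp_div_less mult_ac)
qed (auto simp: kron_mat_def)

lemma upper_triangular_kron_mat:
  assumes "X \<in> carrier_mat n n" "Y \<in> carrier_mat m m" "upper_triangular X" "upper_triangular Y"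
  shows "upper_triangular (kron_mat X Y :: 'a :: mult_zero mat)"
proof (rule upper_triangularI)
  fix i j assume ji: "j < i" and "i < dim_row (kron_mat X Y)"
  then have i: "i < n * m" using assms by (auto simp: kron_mat_def)
  then have "m > 0" by (auto intro!: gr0I)
  have "j div m < i div m \<or> j div m = i div m \<and> j mod m < i mod m"
    using ji div_le_mono[of j i m] by (metis div_mult_mod_eq le_neq_implies_less less_imp_le nat_add_left_cancel_less)
  moreover have "i div m < n" "i mod m < m"
    using i \<open>m > 0\<close> by (auto simp: less_mult_imp_div_less)
  ultimately show "kron_mat X Y $$ (i, j) = 0"
    using assms i ji upper_triangularD[of X] upper_triangularD[of Y] by (auto simp: kron_mat_def)
qed

lemma word_prod_kron_mat:
  assumes "M \<in> carrier_mat n n" "N \<in> carrier_mat n n" "M' \<in> carrier_mat m m" "N' \<in> carrier_mat m m"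
  shows "word_prod (kron_mat M M') (kron_mat N N') a = kron_mat (word_prod M N a) (word_prod M' N' a)"
  by (rule word_prod_hom2[OF assms, where k = "n * m"])
    (simp_all add: kron_mat_carrier kron_mat_mult kron_mat_one)

lemma kron_E_mat:
  assumes "n \<ge> 1" "m \<ge> 1"
  shows "kron_mat (E_mat n) (E_mat m) = E_mat (n * m)"
proof -
  have "(n - 1) * m + (m - 1) = n * m - 1"
    using assms by (simp add: algebra_simps)
  then show ?thesis
    using assms by (simp add: E_mat_single_entry kron_mat_single_entry)
qed

lemma four_block_E_mat:
  assumes "n \<ge> 1" "m \<ge> 1"
  shows "four_block_mat (0\<^sub>m n n) (c \<cdot>\<^sub>m single_entry_mat n m 0 (m - 1)) (0\<^sub>m m n) (0\<^sub>m m m)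
    = c \<cdot>\<^sub>m E_mat (n + m)"
  using assms by (intro eq_matI) (auto simp: E_mat_def single_entry_mat_def)

lemma four_block_sum_E_mat:
  fixes A W B A' W' B' :: "int mat"
  assumes "n \<ge> 1" "m \<ge> 1"
    and carrier: "A \<in> carrier_mat n n" "W \<in> carrier_mat n n" "B \<in> carrier_mat n n"
      "A' \<in> carrier_mat m m" "W' \<in> carrier_mat m m" "B' \<in> carrier_mat m m"
    and eq: "A * W * B = x \<cdot>\<^sub>m E_mat n" "A' * W' * B' = y \<cdot>\<^sub>m E_mat m"
  shows "four_block_mat A (single_entry_mat n m 0 0 * A') (0\<^sub>m m n) (0\<^sub>m m m)
      * four_block_mat W (0\<^sub>m n m) (0\<^sub>m m n) W'
      * four_block_mat (0\<^sub>m n n) (B * single_entry_mat n m (n - 1) (m - 1)) (0\<^sub>m m n) B'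
    = (x + y) \<cdot>\<^sub>m E_mat (n + m)"
proof -
  let ?K = "single_entry_mat n m 0 0 :: int mat"
  let ?L = "single_entry_mat n m (n - 1) (m - 1) :: int mat"
  let ?F = "single_entry_mat n m 0 (m - 1) :: int mat"
  have "A * W * (B * ?L) = (A * W * B) * ?L"
    using carrier by (simp add: assoc_mult_mat[of _ n n _ n _ m])
  also have "\<dots> = x \<cdot>\<^sub>m (E_mat n * ?L)"
    by (simp add: eq E_mat_single_entry mult_smult_assoc_mat[of _ n n _ m])
  also have "E_mat n * ?L = ?F"
    using assms(1) by (simp add: E_mat_single_entry single_entry_mat_mult)
  finally have corner1: "A * W * (B * ?L) = x \<cdot>\<^sub>m ?F" .
  have "?K * A' * W' * B' = ?K * (A' * W' * B')"
    using carrier by (simp add: assoc_mult_mat[of _ n m _ m _ m])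
  also have "\<dots> = y \<cdot>\<^sub>m (?K * E_mat m)"
    by (simp add: eq E_mat_single_entry mult_smult_distrib[of _ n m _ m])
  also have "?K * E_mat m = ?F"
    using assms(2) by (simp add: E_mat_single_entry single_entry_mat_mult)
  finally have corner2: "?K * A' * W' * B' = y \<cdot>\<^sub>m ?F" .
  have "four_block_mat A (?K * A') (0\<^sub>m m n) (0\<^sub>m m m) * four_block_mat W (0\<^sub>m n m) (0\<^sub>m m n) W'
      = four_block_mat (A * W) (?K * A' * W') (0\<^sub>m m n) (0\<^sub>m m m)"
    using carrier by (subst mult_four_block_mat) (auto simp: dim_single_entry_mat)
  also have "\<dots> * four_block_mat (0\<^sub>m n n) (B * ?L) (0\<^sub>m m n) B'
      = four_block_mat (0\<^sub>m n n) (A * W * (B * ?L) + ?K * A' * W' * B') (0\<^sub>m m n) (0\<^sub>m m m)"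
    using carrier by (subst mult_four_block_mat) (auto simp: dim_single_entry_mat)
  also have "\<dots> = (x + y) \<cdot>\<^sub>m E_mat (n + m)"
    unfolding corner1 corner2 using four_block_E_mat[OF assms(1,2)]
    by (simp add: add_smult_distrib_right_mat[OF single_entry_mat_carrier, symmetric])
  finally show ?thesis .
qed

definition word_represents ::
  "nat \<Rightarrow> nat \<Rightarrow> int mat \<Rightarrow> int mat \<Rightarrow> int mat \<Rightarrow> int mat \<Rightarrow> (nat list \<Rightarrow> int) \<Rightarrow> bool" where
  "word_represents t s A M N B f \<longleftrightarrow>
     s \<ge> 1 \<and> uptr_mat s A \<and> uptr_mat s M \<and> uptr_mat s N \<and> uptr_mat s B \<and>
     (\<forall>a. length a = t \<longrightarrow> A * word_prod M N a * B = f a \<cdot>\<^sub>m E_mat s)"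

lemma word_represents_add:
  assumes "word_represents t n A M N B f" "word_represents t m A' M' N' B' g"
  shows "word_represents t (n + m)
    (four_block_mat A (single_entry_mat n m 0 0 * A') (0\<^sub>m m n) (0\<^sub>m m m))
    (four_block_mat M (0\<^sub>m n m) (0\<^sub>m m n) M')
    (four_block_mat N (0\<^sub>m n m) (0\<^sub>m m n) N')
    (four_block_mat (0\<^sub>m n n) (B * single_entry_mat n m (n - 1) (m - 1)) (0\<^sub>m m n) B')
    (\<lambda>a. f a + g a)"
proof -
  from assms have n: "n \<ge> 1" "uptr_mat n A" "uptr_mat n M" "uptr_mat n N" "uptr_mat n B"
    and m: "m \<ge> 1" "uptr_mat m A'" "uptr_mat m M'" "uptr_mat m N'" "uptr_mat m B'"
    by (simp_all add: word_represents_def)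
  then have carrier: "A \<in> carrier_mat n n" "M \<in> carrier_mat n n" "N \<in> carrier_mat n n" "B \<in> carrier_mat n n"
    "A' \<in> carrier_mat m m" "M' \<in> carrier_mat m m" "N' \<in> carrier_mat m m" "B' \<in> carrier_mat m m"
    by (simp_all add: uptr_mat_def)
  have uptr: "uptr_mat (n + m) (four_block_mat X Y (0\<^sub>m m n) Z)"
    if "uptr_mat n X" "Y \<in> carrier_mat n m" "uptr_mat m Z" for X Y Z
    using that upper_triangular_four_block[of X n Z m Y] by (auto simp: uptr_mat_def)
  show ?thesis
    unfolding word_represents_def
  proof (intro conjI allI impI)
    show "uptr_mat (n + m) (four_block_mat A (single_entry_mat n m 0 0 * A') (0\<^sub>m m n) (0\<^sub>m m m))"
      "uptr_mat (n + m) (four_block_mat M (0\<^sub>m n m) (0\<^sub>m m n) M')"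
      "uptr_mat (n + m) (four_block_mat N (0\<^sub>m n m) (0\<^sub>m m n) N')"
      "uptr_mat (n + m) (four_block_mat (0\<^sub>m n n) (B * single_entry_mat n m (n - 1) (m - 1)) (0\<^sub>m m n) B')"
      using n m carrier by (auto intro!: uptr simp: uptr_mat_def upper_triangular_def)
    fix a :: "nat list" assume "length a = t"
    show "four_block_mat A (single_entry_mat n m 0 0 * A') (0\<^sub>m m n) (0\<^sub>m m m)
        * word_prod (four_block_mat M (0\<^sub>m n m) (0\<^sub>m m n) M') (four_block_mat N (0\<^sub>m n m) (0\<^sub>m m n) N') a
        * four_block_mat (0\<^sub>m n n) (B * single_entry_mat n m (n - 1) (m - 1)) (0\<^sub>m m n) B'
      = (f a + g a) \<cdot>\<^sub>m E_mat (n + m)"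
      unfolding word_prod_block_diag[OF carrier(2,3,6,7)]
      by (rule four_block_sum_E_mat[OF n(1) m(1)])
        (use \<open>length a = t\<close> assms carrier word_prod_carrier in \<open>simp_all add: word_represents_def\<close>)
  qed (use n in simp)
qed

lemma word_represents_mult:
  assumes "word_represents t n A M N B f" "word_represents t m A' M' N' B' g"
  shows "word_represents t (n * m) (kron_mat A A') (kron_mat M M') (kron_mat N N') (kron_mat B B')
    (\<lambda>a. f a * g a)"
proof -
  from assms have n: "n \<ge> 1" "uptr_mat n A" "uptr_mat n M" "uptr_mat n N" "uptr_mat n B"
    and m: "m \<ge> 1" "uptr_mat m A'" "uptr_mat m M'" "uptr_mat m N'" "uptr_mat m B'"
    by (simp_all add: word_represents_def)
  then have carrier: "A \<in> carrier_mat n n" "M \<in> carrier_mat n n" "N \<in> carrier_mat n n" "B \<in> carrier_mat n n"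
    "A' \<in> carrier_mat m m" "M' \<in> carrier_mat m m" "N' \<in> carrier_mat m m" "B' \<in> carrier_mat m m"
    by (simp_all add: uptr_mat_def)
  have uptr: "uptr_mat (n * m) (kron_mat X Y)" if "uptr_mat n X" "uptr_mat m Y" for X Y
    using that by (auto simp: uptr_mat_def kron_mat_carrier intro: upper_triangular_kron_mat)
  show ?thesis
    unfolding word_represents_def
  proof (intro conjI allI impI)
    fix a :: "nat list" assume "length a = t"
    then have "A * word_prod M N a * B = f a \<cdot>\<^sub>m E_mat n" "A' * word_prod M' N' a * B' = g a \<cdot>\<^sub>m E_mat m"
      using assms by (simp_all add: word_represents_def)
    moreover have "kron_mat A A' * kron_mat (word_prod M N a) (word_prod M' N' a) * kron_mat B B'
        = kron_mat (A * word_prod M N a * B) (A' * word_prod M' N' a * B')"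
      using carrier word_prod_carrier by (simp add: kron_mat_mult[of _ n n _ n _ m m _ m])
    ultimately show "kron_mat A A' * word_prod (kron_mat M M') (kron_mat N N') a * kron_mat B B'
        = (f a * g a) \<cdot>\<^sub>m E_mat (n * m)"
      using n(1) m(1) by (simp add: word_prod_kron_mat[OF carrier(2,3,6,7)] kron_mat_smult kron_E_mat)
  qed (use n m in \<open>simp_all add: uptr\<close>)
qed

lemma word_represents_smult:
  assumes "word_represents t s A M N B f"
  shows "word_represents t s (c \<cdot>\<^sub>m A) M N B (\<lambda>a. c * f a)"
proof -
  have "uptr_mat s (c \<cdot>\<^sub>m A)"
    using assms by (auto simp: word_represents_def uptr_mat_def upper_triangular_def)
  moreover have "c \<cdot>\<^sub>m A * word_prod M N a * B = (c * f a) \<cdot>\<^sub>m E_mat s" if "length a = t" for a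
  proof -
    have carrier: "A \<in> carrier_mat s s" "word_prod M N a \<in> carrier_mat s s" "B \<in> carrier_mat s s"
      using assms word_prod_carrier by (auto simp: word_represents_def uptr_mat_def)
    then have "c \<cdot>\<^sub>m A * word_prod M N a * B = c \<cdot>\<^sub>m (A * word_prod M N a * B)"
      by (simp add: mult_smult_assoc_mat[of _ s s _ s])
    also have "\<dots> = c \<cdot>\<^sub>m (f a \<cdot>\<^sub>m E_mat s)"
      using assms that by (simp add: word_represents_def)
    also have "\<dots> = (c * f a) \<cdot>\<^sub>m E_mat s"
      by (rule eq_matI) auto
    finally show ?thesis .
  qed
  ultimately show ?thesis
    using assms by (simp add: word_represents_def)
qed

theorem lemma4p2:
  fixes t s1 s2 :: nat and p1 p2 :: int_mpoly
    and A1 M1 N1 B1 A2 M2 N2 B2 :: "int mat"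
  assumes "t \<ge> 1"
    and "mpoly_in_vars t p1" and "mpoly_in_vars t p2"
    and "s1 \<ge> 1" and "s2 \<ge> 1"
    and "uptr_mat s1 A1" "uptr_mat s1 M1" "uptr_mat s1 N1" "uptr_mat s1 B1"
    and "uptr_mat s2 A2" "uptr_mat s2 M2" "uptr_mat s2 N2" "uptr_mat s2 B2"
    and h1: "\<forall>a. length a = t \<longrightarrow>
               A1 * word_prod M1 N1 a * B1 = of_int (mpoly_eval p1 a) \<cdot>\<^sub>m E_mat s1"
    and h2: "\<forall>a. length a = t \<longrightarrow>
               A2 * word_prod M2 N2 a * B2 = of_int (mpoly_eval p2 a) \<cdot>\<^sub>m E_mat s2"
  shows "(\<exists>s3 A3 M3 N3 B3. s3 \<ge> 1 \<and> uptr_mat s3 A3 \<and> uptr_mat s3 M3 \<and> uptr_mat s3 N3 \<and>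
            uptr_mat s3 B3 \<and>
            (\<forall>a. length a = t \<longrightarrow> A3 * word_prod M3 N3 a * B3 =
               of_int (mpoly_eval (p1 + p2) a) \<cdot>\<^sub>m E_mat s3))
       \<and> (\<exists>s4 A4 M4 N4 B4. s4 \<ge> 1 \<and> uptr_mat s4 A4 \<and> uptr_mat s4 M4 \<and> uptr_mat s4 N4 \<and>
            uptr_mat s4 B4 \<and>
            (\<forall>a. length a = t \<longrightarrow> A4 * word_prod M4 N4 a * B4 =
               of_int (mpoly_eval (p1 * p2) a) \<cdot>\<^sub>m E_mat s4))
       \<and> (\<forall>c::int. \<exists>A5. uptr_mat s1 A5 \<and>
            (\<forall>a. length a = t \<longrightarrow> A5 * word_prod M1 N1 a * B1 =
               (c * mpoly_eval p1 a) \<cdot>\<^sub>m E_mat s1))"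
proof -
  have rep1: "word_represents t s1 A1 M1 N1 B1 (mpoly_eval p1)"
    and rep2: "word_represents t s2 A2 M2 N2 B2 (mpoly_eval p2)"
    using assms by (simp_all add: word_represents_def)
  have "\<exists>A M N B. word_represents t (s1 + s2) A M N B (mpoly_eval (p1 + p2))"
    using word_represents_add[OF rep1 rep2] by (auto simp: mpoly_eval_add[symmetric])
  moreover have "\<exists>A M N B. word_represents t (s1 * s2) A M N B (mpoly_eval (p1 * p2))"
    using word_represents_mult[OF rep1 rep2] by (auto simp: mpoly_eval_mult[symmetric])
  moreover have "word_represents t s1 (c \<cdot>\<^sub>m A1) M1 N1 B1 (\<lambda>a. c * mpoly_eval p1 a)" for c
    by (rule word_represents_smult[OF rep1])
  ultimately show ?thesis
    unfolding word_represents_def of_int_eq_id id_apply by blast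
qed

end
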